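(* Let $\Omega$ and $\widetilde{\Omega}$ be Polish spaces and let $\mathcal{P}:\Omega \twoheadrightarrow \mathfrak{P}(\widetilde{\Omega})$ be a non-empty-valued random set such that $\mathrm{graph}(\mathcal{P})=\{(\omega,P)\in\Omega\times\mathfrak{P}(\widetilde{\Omega}):\ P\in\mathcal{P}(\omega)\}$ is an analytic subset of $\Omega\times\mathfrak{P}(\widetilde{\Omega})$. Let $\mathcal{C}$ be a subclass of the open subsets of $\mathbb{R}^d$ and let $X:\Omega\times\widetilde{\Omega}\to\mathbb{R}^d$ be $\mathcal{C}$-analytically measurable. Then $\mathrm{supp}_{\mathcal{P}}X$ is a non-empty, closed-valued and $\mathcal{C}$-analytically measurable random set.
   Context: $\mathfrak{P}(E)$ denotes the set of Borel probability measures on a Polish space $E$, endowed with the weak topology; $\mathcal{A}(E)$ denotes the analytic subsets of $E$ (continuous images of Polish spaces). A random variable $X:\Omega\times\widetilde\Omega\to\mathbb{R}^d$ is $\mathcal{C}$-analytically measurable if $X^{-1}(C)\in\mathcal{A}(\Omega\times\widetilde\Omega)$ for all $C\in\mathcal{C}$. A random set $J:\Omega\twoheadrightarrow\mathbb{R}^d$ is $\mathcal{C}$-analytically measurable if $\{\omega\in\Omega:\ J(\omega)\cap C\neq\emptyset\}\in\mathcal{A}(\Omega)$ for all $C\in\mathcal{C}$. The quasi-sure support is the random set $\mathrm{supp}_{\mathcal{P}}X(\omega):=\bigcap\{F\subset\mathbb{R}^d \text{ closed}:\ P(X(\omega,\cdot)\in F)=1\ \forall P\in\mathcal{P}(\omega)\}$.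 *)

theory Defs
  imports "HOL-Probability.Probability"
begin

definition Polish_space :: "'a topology \<Rightarrow> bool" where
  "Polish_space T \<longleftrightarrow> completely_metrizable_space T \<and> separable_space T"

text \<open>Every Polish space has cardinality at most the continuum, hence is homeomorphic
  to a Polish space carried by a subset of the type nat => real; so we quantify over
  Polish topologies on that carrier type.\<close>
definition analytic_in :: "'a topology \<Rightarrow> 'a set \<Rightarrow> bool" where
  "analytic_in E A \<longleftrightarrow>
     (\<exists>(T :: (nat \<Rightarrow> real) topology) f.
        Polish_space T \<and> continuous_map T E f \<and> f ` topspace T = A)"

definition prob_measures :: "'b::topological_space measure set" where
  "prob_measures = {P. sets P = sets borel \<and> prob_space P}"

definition weak_topology :: "'b::topological_space measure topology" where
  "weak_topology = topology_generated_by
     (insert prob_measures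
       {{P \<in> prob_measures. integral\<^sup>L P f \<in> U} | (f :: 'b \<Rightarrow> real) U.
          continuous_on UNIV f \<and> bounded (range f) \<and> open U})"

text \<open>Quasi-sure support. Probabilities of events are taken w.r.t. the completion of P
  (analytic sets are universally measurable).\<close>
definition qs_supp ::
  "('a \<Rightarrow> 'b measure set) \<Rightarrow> ('a \<times> 'b \<Rightarrow> 'c::topological_space) \<Rightarrow> 'a \<Rightarrow> 'c set" where
  "qs_supp \<P> X \<omega> = \<Inter>{F. closed F \<and>
      (\<forall>P\<in>\<P> \<omega>. measure (completion P) {y. X (\<omega>, y) \<in> F} = 1)}"

end

theory Submission
  imports Defs
begin

text \<open>Closedness of the support is immediate, and non-emptiness follows from Lindelof's theorem:
  the complement of the support is a countable union of open sets with null preimages.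

  For analyticity fix C and write the analytic preimage X -` C as g(M), with M complete and
  separable. A Souslin scheme for g(M) -- closures of the images of finitely indexed cells of
  M -- shows that each section {y. X(\<omega>, y) \<in> C} is universally measurable, and that it has
  positive P-measure iff for some m and some sequence s of naturals all closed sets of the scheme
  along s have sections of measure at least 1/(m+1). Measures of sections of a closed set are
  upper semicontinuous in (\<omega>, P) for the weak topology, so these conditions cut out a closed
  subset of the product of graph(\<P>) with the space of sequences of naturals; the set of \<omega> where
  the support meets C is its projection, hence analytic.\<close>

section \<open>Polish spaces and analytic sets\<close>

lemma (in Metric_space) separable_imp_second_countable:
  assumes "separable_space mtopology"
  shows "second_countable mtopology"
proof -
  obtain C where C: "countable C" "C \<subseteq> M" "mtopology closure_of C = M"
    using assms unfolding separable_space_def by auto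
  define \<B> where "\<B> = (\<lambda>(c, n). mball c (1 / real (Suc n))) ` (C \<times> UNIV)"
  have "\<exists>V\<in>\<B>. x \<in> V \<and> V \<subseteq> U" if "openin mtopology U" "x \<in> U" for U x
  proof -
    have "x \<in> M" "\<exists>r>0. mball x r \<subseteq> U"
      using that openin_mtopology by auto
    then obtain r where r: "r > 0" "mball x r \<subseteq> U"
      by blast
    obtain n where n: "1 / real (Suc n) < r / 2"
      using nat_approx_posE[of "r / 2"] r by auto
    have "x \<in> mtopology closure_of C"
      using C(3) \<open>x \<in> M\<close> by simp
    then have "\<forall>s>0. \<exists>y\<in>C. y \<in> mball x s"
      unfolding metric_closure_of by blast
    then obtain c where "c \<in> C" "c \<in> mball x (1 / real (Suc n))"
      by (meson of_nat_0_less_iff zero_less_Suc zero_less_divide_1_iff)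
    then have c: "c \<in> C" "c \<in> M" "d x c < 1 / real (Suc n)"
      by auto
    have "mball c (1 / real (Suc n)) \<subseteq> mball x r"
    proof
      fix y assume "y \<in> mball c (1 / real (Suc n))"
      then have "y \<in> M" "d c y < 1 / real (Suc n)"
        by auto
      moreover have "d x y \<le> d x c + d c y"
        using \<open>x \<in> M\<close> c(2) \<open>y \<in> M\<close> by (rule triangle)
      ultimately show "y \<in> mball x r"
        using \<open>x \<in> M\<close> c(3) n by simp
    qed
    moreover have "x \<in> mball c (1 / real (Suc n))"
      using \<open>x \<in> M\<close> c by (simp add: commute)
    moreover have "mball c (1 / real (Suc n)) \<in> \<B>"
      unfolding \<B>_def using c(1) by blast
    ultimately show ?thesis
      using r(2) by blast
  qed
  moreover have "countable \<B>" "\<forall>V\<in>\<B>. openin mtopology V"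
    unfolding \<B>_def using C(1) by auto
  ultimately show ?thesis
    unfolding second_countable_def by blast
qed

lemma Polish_space_imp_second_countable: "Polish_space T \<Longrightarrow> second_countable T"
  unfolding Polish_space_def completely_metrizable_space_def
  using Metric_space.separable_imp_second_countable by blast

lemma Polish_space_closedin:
  assumes "Polish_space T" "closedin T Z"
  shows "Polish_space (subtopology T Z)"
  unfolding Polish_space_def
proof
  show "completely_metrizable_space (subtopology T Z)"
    using assms unfolding Polish_space_def by (blast intro: completely_metrizable_space_closedin)
  show "separable_space (subtopology T Z)"
    using assms(1) by (intro second_countable_imp_separable_space second_countable_subtopology
        Polish_space_imp_second_countable)
qed

lemma Polish_space_euclidean: "Polish_space (euclidean :: 'a::polish_space topology)"
proof -
  obtain D :: "'a set" where D: "countable D" "\<And>X. open X \<Longrightarrow> X \<noteq> {} \<Longrightarrow> \<exists>d\<in>D. d \<in> X"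
    using countable_dense_setE by blast
  have "closure D = UNIV"
    using D(2)[of "- closure D"] closure_subset by auto
  then show ?thesis
    unfolding Polish_space_def separable_space_def
    using D(1) completely_metrizable_space_euclidean by auto
qed

lemma Polish_space_prod_topology:
  assumes "Polish_space S" "Polish_space T"
  shows "Polish_space (prod_topology S T)"
proof -
  obtain C D where "countable C" "C \<subseteq> topspace S" "S closure_of C = topspace S"
    and "countable D" "D \<subseteq> topspace T" "T closure_of D = topspace T"
    using assms unfolding Polish_space_def separable_space_def by metis
  then have "separable_space (prod_topology S T)"
    unfolding separable_space_def by (intro exI[of _ "C \<times> D"]) (auto simp: closure_of_Times)
  then show ?thesis
    using assms unfolding Polish_space_def by (simp add: completely_metrizable_space_prod_topology)
qed

text \<open>analytic_in fixes the carrier of the parameter space to nat \<Rightarrow> real; a Polish space on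
  another carrier is moved there by pulling its topology back along an injective code.\<close>
lemma analytic_in_image_Polish:
  fixes S :: "'x topology" and code :: "'x \<Rightarrow> nat \<Rightarrow> real"
  assumes S: "Polish_space S" and h: "continuous_map S E h"
    and decode: "\<And>x. x \<in> topspace S \<Longrightarrow> decode (code x) = x"
  shows "analytic_in E (h ` topspace S)"
proof -
  define T where "T = pullback_topology (code ` topspace S) decode S"
  have topspace_T: "topspace T = code ` topspace S"
    unfolding T_def topspace_pullback_topology using decode by force
  have "continuous_map T S decode"
    unfolding T_def using continuous_map_pullback[OF continuous_map_id] by (simp add: o_def)
  moreover have "continuous_map S T code"
    unfolding T_def
  proof (rule continuous_map_pullback')
    show "continuous_map S S (decode \<circ> code)"
      by (rule continuous_map_eq[OF continuous_map_id]) (simp add: decode)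
  qed auto
  ultimately have "homeomorphic_maps T S decode code"
    unfolding homeomorphic_maps_def using decode topspace_T by auto
  then have "T homeomorphic_space S"
    unfolding homeomorphic_space_def by blast
  then have "Polish_space T"
    using S unfolding Polish_space_def
    by (simp add: homeomorphic_completely_metrizable_space homeomorphic_separable_space)
  moreover have "continuous_map T E (h \<circ> decode)"
    using \<open>continuous_map T S decode\<close> h by (rule continuous_map_compose)
  moreover have "(h \<circ> decode) ` topspace T = h ` topspace S"
    unfolding topspace_T using decode by (force simp: image_image)
  ultimately show ?thesis
    unfolding analytic_in_def by blast
qed

definition interleave :: "(nat \<Rightarrow> 'a) \<times> (nat \<Rightarrow> 'a) \<Rightarrow> nat \<Rightarrow> 'a" where
  "interleave p n = (if even n then fst p (n div 2) else snd p (n div 2))"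

definition deinterleave :: "(nat \<Rightarrow> 'a) \<Rightarrow> (nat \<Rightarrow> 'a) \<times> (nat \<Rightarrow> 'a)" where
  "deinterleave z = (\<lambda>n. z (2 * n), \<lambda>n. z (2 * n + 1))"

lemma deinterleave_interleave [simp]: "deinterleave (interleave p) = p"
  unfolding deinterleave_def interleave_def by (cases p) auto

lemma analytic_in_image_closedin:
  fixes T :: "(nat \<Rightarrow> real) topology"
  assumes T: "Polish_space T"
    and Z: "closedin (prod_topology T (euclidean :: (nat \<Rightarrow> real) topology)) Z"
    and h: "continuous_map (prod_topology T euclidean) E h"
  shows "analytic_in E (h ` Z)"
proof -
  let ?S = "subtopology (prod_topology T (euclidean :: (nat \<Rightarrow> real) topology)) Z"
  have "Polish_space ?S"
    using Polish_space_closedin[OF Polish_space_prod_topology[OF T Polish_space_euclidean] Z] .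
  moreover have "continuous_map ?S E h"
    using h by (rule continuous_map_from_subtopology)
  moreover have "topspace ?S = Z"
    using closedin_subset[OF Z] by auto
  ultimately show ?thesis
    using analytic_in_image_Polish[of ?S E h deinterleave interleave] by simp
qed

lemma analytic_in_empty: "analytic_in E {}"
proof -
  let ?T = "subtopology (euclidean :: (nat \<Rightarrow> real) topology) {}"
  have "Polish_space ?T"
    by (rule Polish_space_closedin[OF Polish_space_euclidean closedin_empty])
  moreover have "continuous_map ?T E f" for f
    by (simp add: continuous_map_def)
  ultimately show ?thesis
    unfolding analytic_in_def by fastforce
qed

lemma open_vimage_coordinate: "open B \<Longrightarrow> open ((\<lambda>\<rho>::nat \<Rightarrow> real. \<rho> i) -` B)"
  using continuous_on_open_vimage[of UNIV "\<lambda>\<rho>::nat \<Rightarrow> real. \<rho> i"] by simp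

lemma nat_floor_locally_constant_on_Nats:
  fixes \<rho> :: "nat \<Rightarrow> real"
  assumes "\<forall>i. \<rho> i \<in> \<nat>"
  obtains V where "open V" "\<rho> \<in> V"
    and "\<And>\<rho>' i. \<rho>' \<in> V \<Longrightarrow> \<forall>i. \<rho>' i \<in> \<nat> \<Longrightarrow> i \<le> k \<Longrightarrow> nat \<lfloor>\<rho>' i\<rfloor> = nat \<lfloor>\<rho> i\<rfloor>"
proof
  let ?V = "\<Inter>i\<le>k. (\<lambda>\<rho>'. \<rho>' i) -` ball (\<rho> i) (1/2)"
  show "open ?V"
    by (intro open_INT ballI open_vimage_coordinate open_ball) auto
  show "\<rho> \<in> ?V"
    by simp
  fix \<rho>' i assume "\<rho>' \<in> ?V" "\<forall>i. \<rho>' i \<in> \<nat>" "i \<le> k"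
  then have "\<bar>\<rho>' i - \<rho> i\<bar> < 1/2"
    by (auto simp: dist_real_def abs_minus_commute)
  moreover obtain m n where mn: "\<rho>' i = real m" "\<rho> i = real n"
    using assms \<open>\<forall>i. \<rho>' i \<in> \<nat>\<close> by (metis Nats_cases)
  ultimately have "m = n"
    by linarith
  then show "nat \<lfloor>\<rho>' i\<rfloor> = nat \<lfloor>\<rho> i\<rfloor>"
    by (simp add: mn)
qed

text \<open>Sequences of naturals are coded as the \<nat>-valued points of nat \<Rightarrow> real.\<close>
lemma closedin_prefix_determined:
  fixes \<Phi> :: "nat \<Rightarrow> (nat \<Rightarrow> nat) \<Rightarrow> 'x \<Rightarrow> bool"
  assumes prefix: "\<And>k s s' x. (\<forall>i\<le>k. s i = s' i) \<Longrightarrow> \<Phi> k s x = \<Phi> k s' x"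
    and closed: "\<And>k s. closedin X {x \<in> topspace X. \<Phi> k s x}"
  shows "closedin (prod_topology X (euclidean :: (nat \<Rightarrow> real) topology))
     {(x, \<rho>). x \<in> topspace X \<and> (\<forall>i. \<rho> i \<in> \<nat>) \<and> (\<forall>k. \<Phi> k (\<lambda>i. nat \<lfloor>\<rho> i\<rfloor>) x)}"
    (is "closedin ?T ?Z")
proof -
  have "\<exists>U V. openin X U \<and> openin euclidean V \<and> x \<in> U \<and> \<rho> \<in> V \<and> U \<times> V \<subseteq> topspace ?T - ?Z"
    if x: "x \<in> topspace X" and "(x, \<rho>) \<notin> ?Z" for x \<rho>
  proof (cases "\<forall>i. \<rho> i \<in> \<nat>")
    case False
    then obtain i where "\<rho> i \<notin> \<nat>"
      by blast
    then show ?thesis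
      using x by (intro exI[of _ "topspace X"] exI[of _ "(\<lambda>\<rho>'. \<rho>' i) -` (- \<nat>)"])
        (auto simp: open_vimage_coordinate open_Compl)
  next
    case True
    then obtain k where k: "\<not> \<Phi> k (\<lambda>i. nat \<lfloor>\<rho> i\<rfloor>) x"
      using \<open>(x, \<rho>) \<notin> ?Z\<close> x by auto
    obtain V where V: "open V" "\<rho> \<in> V"
      and same: "\<And>\<rho>' i. \<rho>' \<in> V \<Longrightarrow> \<forall>i. \<rho>' i \<in> \<nat> \<Longrightarrow> i \<le> k \<Longrightarrow> nat \<lfloor>\<rho>' i\<rfloor> = nat \<lfloor>\<rho> i\<rfloor>"
      using nat_floor_locally_constant_on_Nats[OF True] by metis
    define U where "U = topspace X - {x \<in> topspace X. \<Phi> k (\<lambda>i. nat \<lfloor>\<rho> i\<rfloor>) x}"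
    have "(x', \<rho>') \<notin> ?Z" if "x' \<in> U" "\<rho>' \<in> V" for x' \<rho>'
      using prefix[of k "\<lambda>i. nat \<lfloor>\<rho>' i\<rfloor>" "\<lambda>i. nat \<lfloor>\<rho> i\<rfloor>" x'] same[OF \<open>\<rho>' \<in> V\<close>] that(1)
      by (auto simp: U_def)
    moreover have "openin X U"
      unfolding U_def using closed by (rule openin_diff[OF openin_topspace])
    ultimately show ?thesis
      using x k V by (intro exI[of _ U] exI[of _ V]) (auto simp: U_def)
  qed
  then have "openin ?T (topspace ?T - ?Z)"
    unfolding openin_prod_topology_alt by auto
  then show ?thesis
    by (auto simp: closedin_def)
qed

lemma analytic_in_image_Souslin:
  fixes \<Phi> :: "nat \<Rightarrow> (nat \<Rightarrow> nat) \<Rightarrow> 'x \<Rightarrow> bool"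
  assumes G: "analytic_in E G" and h: "continuous_map E F h"
    and prefix: "\<And>k s s' x. (\<forall>i\<le>k. s i = s' i) \<Longrightarrow> \<Phi> k s x = \<Phi> k s' x"
    and closed: "\<And>k s. closedin E {x \<in> topspace E. \<Phi> k s x}"
  shows "analytic_in F (h ` {x \<in> G. \<exists>s. \<forall>k. \<Phi> k s x})"
proof -
  obtain T :: "(nat \<Rightarrow> real) topology" and f
    where T: "Polish_space T" and f: "continuous_map T E f" and G_eq: "G = f ` topspace T"
    using G unfolding analytic_in_def by blast
  define Z where "Z = {(t, \<rho>::nat \<Rightarrow> real). t \<in> topspace T \<and> (\<forall>i. \<rho> i \<in> \<nat>) \<and>
      (\<forall>k. \<Phi> k (\<lambda>i. nat \<lfloor>\<rho> i\<rfloor>) (f t))}"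
  have "closedin (prod_topology T euclidean) Z"
    unfolding Z_def
  proof (rule closedin_prefix_determined)
    fix k s
    have "{t \<in> topspace T. f t \<in> {x \<in> topspace E. \<Phi> k s x}} = {t \<in> topspace T. \<Phi> k s (f t)}"
      using continuous_map_image_subset_topspace[OF f] by blast
    then show "closedin T {t \<in> topspace T. \<Phi> k s (f t)}"
      using closedin_continuous_map_preimage[OF f closed[of k s]] by simp
  qed (use prefix in blast)
  moreover have "continuous_map (prod_topology T euclidean) F (h \<circ> f \<circ> fst)"
    by (intro continuous_map_compose[OF continuous_map_fst] continuous_map_compose[OF f h])
  moreover have "(h \<circ> f \<circ> fst) ` Z = h ` {x \<in> G. \<exists>s. \<forall>k. \<Phi> k s x}"
  proof
    show "(h \<circ> f \<circ> fst) ` Z \<subseteq> h ` {x \<in> G. \<exists>s. \<forall>k. \<Phi> k s x}"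
      unfolding Z_def G_eq by force
    show "h ` {x \<in> G. \<exists>s. \<forall>k. \<Phi> k s x} \<subseteq> (h \<circ> f \<circ> fst) ` Z"
    proof
      fix y assume "y \<in> h ` {x \<in> G. \<exists>s. \<forall>k. \<Phi> k s x}"
      then obtain t s where "t \<in> topspace T" "\<forall>k. \<Phi> k s (f t)" "y = h (f t)"
        unfolding G_eq by blast
      then have "(t, \<lambda>i. real (s i)) \<in> Z"
        unfolding Z_def by simp
      then show "y \<in> (h \<circ> f \<circ> fst) ` Z"
        using \<open>y = h (f t)\<close> by force
    qed
  qed
  ultimately show ?thesis
    using analytic_in_image_closedin[OF T] by metis
qed

section \<open>Universal measurability of analytic sets\<close>

lemma inner_measure_of_attain:
  "\<exists>U\<in>sets M. U \<subseteq> A \<and> (\<forall>B\<in>sets M. B \<subseteq> A \<longrightarrow> emeasure M B \<le> emeasure M U)"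
proof -
  define I where "I = emeasure M ` {B \<in> sets M. B \<subseteq> A}"
  have "I \<noteq> {}"
    unfolding I_def by blast
  then obtain f :: "nat \<Rightarrow> ennreal" where f: "range f \<subseteq> I" "Sup I = (SUP n. f n)"
    by (meson ennreal_Sup_countable_SUP)
  have "\<forall>n. \<exists>B. B \<in> sets M \<and> B \<subseteq> A \<and> f n = emeasure M B"
    using f(1) unfolding I_def by blast
  then obtain B where B: "\<And>n. B n \<in> sets M" "\<And>n. B n \<subseteq> A" "\<And>n. f n = emeasure M (B n)"
    by metis
  have le_U: "Sup I \<le> emeasure M (\<Union>n. B n)"
    unfolding f(2) using B by (auto intro!: SUP_least emeasure_mono)
  have "emeasure M B' \<le> emeasure M (\<Union>n. B n)" if "B' \<in> sets M" "B' \<subseteq> A" for B'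
  proof -
    have "emeasure M B' \<le> Sup I"
      using that unfolding I_def by (auto intro: Sup_upper)
    then show ?thesis
      using le_U by (rule order.trans)
  qed
  then show ?thesis
    using B by (intro bexI[of _ "\<Union>n. B n"]) auto
qed

lemma sets_completionI_inner_approx:
  assumes "finite_measure M" and A: "A \<subseteq> space M"
    and inner: "\<And>c. c < outer_measure_of M A \<Longrightarrow> \<exists>B\<in>sets M. B \<subseteq> A \<and> c \<le> emeasure M B"
  shows "A \<in> sets (completion M)"
proof -
  interpret finite_measure M by fact
  obtain H where H: "H \<in> sets M" "A \<subseteq> H" "outer_measure_of M A = emeasure M H"
    using outer_measure_of_attain[OF A] by blast
  obtain U where U: "U \<in> sets M" "U \<subseteq> A" "\<And>B. B \<in> sets M \<Longrightarrow> B \<subseteq> A \<Longrightarrow> emeasure M B \<le> emeasure M U"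
    using inner_measure_of_attain[of M A] by blast
  have "emeasure M H \<le> emeasure M U"
  proof (rule dense_le)
    fix c assume "c < emeasure M H"
    then show "c \<le> emeasure M U"
      using inner H(3) U(3) by (metis order.trans)
  qed
  moreover have "emeasure M U \<le> emeasure M H"
    using U H by (intro emeasure_mono) auto
  ultimately have eq: "emeasure M U = emeasure M H"
    by (rule antisym[rotated])
  show ?thesis
  proof (rule complete_measure.complete_sets_sandwich[OF completion.complete_measure_axioms])
    show "U \<in> sets (completion M)" "H \<in> sets (completion M)"
      using U H by auto
    show "U \<subseteq> A" "A \<subseteq> H"
      using U H by auto
    show "emeasure (completion M) U = emeasure (completion M) H"
      using U H eq by simp
    show "emeasure (completion M) U < \<infinity>"
      using U by (simp add: emeasure_eq_measure)
  qed
qed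

lemma finite_measure_completion: "finite_measure M \<Longrightarrow> finite_measure (completion M)"
  by (rule finite_measureI) (simp add: finite_measure.emeasure_finite)

lemma (in Metric_space) mtotally_boundedI_cover:
  assumes "S \<subseteq> M" and cover: "\<And>e. e > 0 \<Longrightarrow> \<exists>K. finite K \<and> K \<subseteq> M \<and> S \<subseteq> (\<Union>c\<in>K. mball c e)"
  shows "mtotally_bounded S"
  unfolding mtotally_bounded_def
proof (intro allI impI)
  fix e :: real assume "e > 0"
  then obtain K where K: "finite K" "K \<subseteq> M" "S \<subseteq> (\<Union>c\<in>K. mball c (e/2))"
    using cover[of "e/2"] by auto
  define K' where "K' = {c\<in>K. mball c (e/2) \<inter> S \<noteq> {}}"
  have "\<forall>c\<in>K'. \<exists>y. y \<in> mball c (e/2) \<inter> S"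
    unfolding K'_def by blast
  then obtain r where r: "\<And>c. c \<in> K' \<Longrightarrow> r c \<in> mball c (e/2) \<inter> S"
    by metis
  have "S \<subseteq> (\<Union>c\<in>K'. mball (r c) e)"
  proof
    fix y assume "y \<in> S"
    then obtain c where c: "c \<in> K" "y \<in> mball c (e/2)"
      using K(3) by auto
    then have "c \<in> K'"
      using \<open>y \<in> S\<close> unfolding K'_def by auto
    with c r[of c] have "d (r c) y < e"
      using triangle[of "r c" c y] commute[of c "r c"] by auto
    with \<open>c \<in> K'\<close> r[of c] c show "y \<in> (\<Union>c\<in>K'. mball (r c) e)"
      by auto
  qed
  moreover have "finite (r ` K')" "r ` K' \<subseteq> S"
    using K(1) r by (auto simp: K'_def)
  ultimately show "\<exists>K. finite K \<and> K \<subseteq> S \<and> S \<subseteq> (\<Union>x\<in>K. mball x e)"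
    by (intro exI[of _ "r ` K'"]) auto
qed

locale souslin_scheme = Metric_space M d for M :: "'p set" and d +
  fixes g :: "'p \<Rightarrow> 'e::metric_space" and x :: "nat \<Rightarrow> 'p"
  assumes complete: "mcomplete"
    and continuous_g: "continuous_map mtopology euclidean g"
    and centres: "range x \<subseteq> M"
    and centres_dense: "mtopology closure_of range x = M"
begin

definition near :: "nat \<Rightarrow> nat \<Rightarrow> 'p set" where
  "near j n = (\<Union>i\<le>n. mcball (x i) (1 / real (Suc j)))"

definition scheme :: "(nat \<Rightarrow> nat) \<Rightarrow> nat \<Rightarrow> 'p set" where
  "scheme s k = M \<inter> (\<Inter>j<k. near j (s j))"

definition closed_scheme :: "(nat \<Rightarrow> nat) \<Rightarrow> nat \<Rightarrow> 'e set" where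
  "closed_scheme s k = closure (g ` scheme s k)"

lemma near_mono: "n \<le> n' \<Longrightarrow> near j n \<subseteq> near j n'"
  unfolding near_def by (intro UN_mono) auto

lemma UN_near: "(\<Union>n. near j n) = M"
proof
  show "(\<Union>n. near j n) \<subseteq> M"
    unfolding near_def by auto
  show "M \<subseteq> (\<Union>n. near j n)"
  proof
    fix t assume "t \<in> M"
    then have "\<forall>r>0. \<exists>y\<in>range x. y \<in> mball t r"
      using centres_dense unfolding metric_closure_of by blast
    then have "\<exists>y\<in>range x. y \<in> mball t (1 / real (Suc j))"
      by (simp add: \<open>t \<in> M\<close>)
    then obtain i where "d t (x i) < 1 / real (Suc j)"
      by auto
    then have "t \<in> near j i"
      using \<open>t \<in> M\<close> centres commute[of t "x i"] unfolding near_def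
      by (intro UN_I[of i]) (auto simp: image_subset_iff)
    then show "t \<in> (\<Union>n. near j n)"
      by blast
  qed
qed

lemma scheme_0 [simp]: "scheme s 0 = M"
  unfolding scheme_def by simp

lemma scheme_Suc: "scheme s (Suc k) = scheme s k \<inter> near k (s k)"
  unfolding scheme_def by (auto simp: lessThan_Suc)

lemma scheme_cong: "(\<And>j. j < k \<Longrightarrow> s j = s' j) \<Longrightarrow> scheme s k = scheme s' k"
  unfolding scheme_def by auto

lemma scheme_fun_upd_Suc: "scheme (s(k := n)) (Suc k) = scheme s k \<inter> near k n"
  using scheme_cong[of k "s(k := n)" s] by (simp add: scheme_Suc)

lemma scheme_antimono: "k \<le> k' \<Longrightarrow> scheme s k' \<subseteq> scheme s k"
  unfolding scheme_def by auto

lemma closed_scheme_cong: "(\<And>j. j < k \<Longrightarrow> s j = s' j) \<Longrightarrow> closed_scheme s k = closed_scheme s' k"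
  unfolding closed_scheme_def using scheme_cong by metis

lemma closed_closed_scheme [simp]: "closed (closed_scheme s k)"
  unfolding closed_scheme_def by simp

lemma closed_scheme_antimono: "k \<le> k' \<Longrightarrow> closed_scheme s k' \<subseteq> closed_scheme s k"
  unfolding closed_scheme_def by (intro closure_mono image_mono scheme_antimono)

text \<open>Beyond index j the points lie within 1/(j+1) of the centres x 0, ..., x (s j).\<close>
lemma mtotally_bounded_scheme_sequence:
  assumes t: "\<And>k. t k \<in> scheme s k"
  shows "mtotally_bounded (range t)"
proof -
  have tM: "range t \<subseteq> M"
    using t unfolding scheme_def by auto
  show ?thesis
  proof (rule mtotally_boundedI_cover[OF tM])
    fix e :: real assume "e > 0"
    then obtain j where j: "1 / real (Suc j) < e"
      using nat_approx_posE by blast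
    have "t k \<in> (\<Union>c\<in>x ` {..s j} \<union> t ` {..j}. mball c e)" for k
    proof (cases "k \<le> j")
      case True
      then show ?thesis
        using tM \<open>e > 0\<close> by (intro UN_I[of "t k"]) (auto simp: image_subset_iff)
    next
      case False
      then have "t k \<in> near j (s j)"
        using t[of k] unfolding scheme_def by auto
      then obtain i where "i \<le> s j" "t k \<in> mcball (x i) (1 / real (Suc j))"
        unfolding near_def by auto
      then show ?thesis
        using j by (intro UN_I[of "x i"]) auto
    qed
    then have "range t \<subseteq> (\<Union>c\<in>x ` {..s j} \<union> t ` {..j}. mball c e)"
      by blast
    then show "\<exists>K. finite K \<and> K \<subseteq> M \<and> range t \<subseteq> (\<Union>c\<in>K. mball c e)"
      using centres tM by (intro exI[of _ "x ` {..s j} \<union> t ` {..j}"]) auto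
  qed
qed

lemma Inter_closed_scheme_subset: "(\<Inter>k. closed_scheme s k) \<subseteq> g ` M"
proof
  fix z assume z: "z \<in> (\<Inter>k. closed_scheme s k)"
  have "\<exists>t. t \<in> scheme s k \<and> dist (g t) z < 1 / real (Suc k)" for k
  proof -
    have "z \<in> closure (g ` scheme s k)"
      using z unfolding closed_scheme_def by auto
    moreover have "(0::real) < 1 / real (Suc k)"
      by simp
    ultimately show ?thesis
      unfolding closure_approachable by blast
  qed
  then obtain t where t: "\<And>k. t k \<in> scheme s k" "\<And>k. dist (g (t k)) z < 1 / real (Suc k)"
    by metis
  obtain r where r: "strict_mono r" "MCauchy (t \<circ> r)"
    using mtotally_bounded_scheme_sequence[OF t(1)] mtotally_bounded_sequentially by blast
  then obtain l where l: "limitin mtopology (t \<circ> r) l sequentially"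
    using complete unfolding mcomplete_def by blast
  then have "l \<in> M"
    using limitin_topspace by (metis topspace_mtopology)
  have "(\<lambda>n. g (t (r n))) \<longlonglongrightarrow> g l"
    using continuous_map_limit[OF continuous_g l] by (simp add: o_def)
  moreover have "(\<lambda>n. g (t (r n))) \<longlonglongrightarrow> z"
  proof (rule tendstoI)
    fix e :: real assume "e > 0"
    then obtain N where N: "1 / real (Suc N) < e"
      using nat_approx_posE by blast
    have "dist (g (t (r n))) z < e" if "N \<le> n" for n
    proof -
      have "1 / real (Suc (r n)) \<le> 1 / real (Suc N)"
        using seq_suble[OF r(1), of n] that by (intro divide_left_mono) auto
      then show ?thesis
        using t(2)[of "r n"] N by simp
    qed
    then show "\<forall>\<^sub>F n in sequentially. dist (g (t (r n))) z < e"
      using eventually_sequentially by blast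
  qed
  ultimately have "z = g l"
    using LIMSEQ_unique by blast
  then show "z \<in> g ` M"
    using \<open>l \<in> M\<close> by blast
qed

context
  fixes P :: "'b::topological_space measure" and \<phi> :: "'b \<Rightarrow> 'e"
  assumes finite_P: "finite_measure P" and sets_P: "sets P = sets borel"
    and continuous_\<phi>: "continuous_on UNIV \<phi>"
begin

lemma space_P: "space P = UNIV"
  using sets_eq_imp_space_eq[OF sets_P] by simp

lemma vimage_closed_in_sets: "closed F \<Longrightarrow> \<phi> -` F \<in> sets P"
  unfolding sets_P using continuous_\<phi> continuous_on_closed_vimage[of UNIV \<phi>] by auto

lemma inner_approx_by_closed_scheme:
  assumes c: "\<And>k. c \<le> emeasure P (\<phi> -` closed_scheme s k)"
  shows "\<exists>B\<in>sets P. B \<subseteq> \<phi> -` g ` M \<and> c \<le> emeasure P B"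
proof (intro bexI conjI)
  interpret finite_measure P by (rule finite_P)
  let ?B = "\<Inter>k. \<phi> -` closed_scheme s k"
  show "?B \<in> sets P"
    using vimage_closed_in_sets by auto
  show "?B \<subseteq> \<phi> -` g ` M"
    using Inter_closed_scheme_subset[of s] by blast
  have "antimono (\<lambda>k. \<phi> -` closed_scheme s k)"
    unfolding antimono_def by (auto intro!: vimage_mono closed_scheme_antimono)
  then have "(INF k. emeasure P (\<phi> -` closed_scheme s k)) = emeasure P ?B"
    using vimage_closed_in_sets by (intro INF_emeasure_decseq') auto
  then show "c \<le> emeasure P ?B"
    using c by (metis INF_greatest)
qed

lemma outer_measure_of_scheme_Suc:
  assumes "c < outer_measure_of P (\<phi> -` g ` scheme s k)"
  shows "\<exists>n. c < outer_measure_of P (\<phi> -` g ` scheme (s(k := n)) (Suc k))"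
proof -
  have "incseq (\<lambda>n. \<phi> -` g ` scheme (s(k := n)) (Suc k))"
    unfolding scheme_fun_upd_Suc by (intro monoI vimage_mono image_mono Int_mono order.refl near_mono)
  moreover have "(\<Union>n. scheme s k \<inter> near k n) = scheme s k"
    unfolding Int_UN_distrib[symmetric] UN_near by (auto simp: scheme_def)
  then have "(\<Union>n. \<phi> -` g ` scheme (s(k := n)) (Suc k)) = \<phi> -` g ` scheme s k"
    unfolding scheme_fun_upd_Suc by (metis image_UN vimage_UN)
  ultimately have "outer_measure_of P (\<phi> -` g ` scheme s k) =
      (SUP n. outer_measure_of P (\<phi> -` g ` scheme (s(k := n)) (Suc k)))"
    by (simp add: SUP_outer_measure_of_incseq space_P)
  with assms show ?thesis
    by (simp add: less_SUP_iff)
qed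

text \<open>The index sequence is built by dependent choice; the state after step k is a function
  whose values below k are final.\<close>
lemma outer_approx_by_closed_scheme:
  assumes c: "c < outer_measure_of P (\<phi> -` g ` M)"
  shows "\<exists>s. \<forall>k. c < emeasure P (\<phi> -` closed_scheme s k)"
proof -
  let ?good = "\<lambda>k \<sigma>. c < outer_measure_of P (\<phi> -` g ` scheme \<sigma> k)"
  have "\<exists>f. \<forall>k. ?good k (f k) \<and> (\<forall>j<k. f (Suc k) j = f k j)"
  proof (rule dependent_nat_choice)
    show "\<exists>\<sigma>. ?good 0 \<sigma>"
      using c by simp
    fix \<sigma> k assume "?good k \<sigma>"
    then obtain n where "?good (Suc k) (\<sigma>(k := n))"
      using outer_measure_of_scheme_Suc by blast
    then show "\<exists>\<sigma>'. ?good (Suc k) \<sigma>' \<and> (\<forall>j<k. \<sigma>' j = \<sigma> j)"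
      by (intro exI[of _ "\<sigma>(k := n)"]) auto
  qed
  then obtain f where f: "\<And>k. ?good k (f k)" "\<And>k j. j < k \<Longrightarrow> f (Suc k) j = f k j"
    by blast
  define s where "s j = f (Suc j) j" for j
  have f_s: "f k j = s j" if "j < k" for j k
    using that by (induction k) (auto simp: s_def less_Suc_eq f(2))
  show ?thesis
  proof (intro exI allI)
    fix k
    have "c < outer_measure_of P (\<phi> -` g ` scheme s k)"
      using f(1)[of k] scheme_cong[of k "f k" s] f_s by simp
    also have "\<dots> \<le> outer_measure_of P (\<phi> -` closed_scheme s k)"
      unfolding closed_scheme_def by (intro outer_measure_of_mono vimage_mono closure_subset)
    finally show "c < emeasure P (\<phi> -` closed_scheme s k)"
      by (simp add: vimage_closed_in_sets)
  qed
qed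

lemma vimage_image_in_sets_completion: "\<phi> -` g ` M \<in> sets (completion P)"
proof (rule sets_completionI_inner_approx[OF finite_P])
  fix c assume "c < outer_measure_of P (\<phi> -` g ` M)"
  then obtain s where "\<And>k. c < emeasure P (\<phi> -` closed_scheme s k)"
    using outer_approx_by_closed_scheme by blast
  then show "\<exists>B\<in>sets P. B \<subseteq> \<phi> -` g ` M \<and> c \<le> emeasure P B"
    by (intro inner_approx_by_closed_scheme less_imp_le)
qed (simp add: space_P)

lemma measure_completion_vimage_image_pos_iff:
  "0 < measure (completion P) (\<phi> -` g ` M) \<longleftrightarrow>
    (\<exists>m s. \<forall>k. 1 / real (Suc m) \<le> measure P (\<phi> -` closed_scheme s k))"
proof
  interpret finite_measure P by (rule finite_P)
  interpret C: finite_measure "completion P" by (rule finite_measure_completion[OF finite_P])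
  let ?A = "\<phi> -` g ` M"
  assume pos: "0 < measure (completion P) ?A"
  obtain H where H: "H \<in> sets P" "?A \<subseteq> H" "outer_measure_of P ?A = emeasure P H"
    using outer_measure_of_attain[of ?A P] by (auto simp: space_P)
  have "measure (completion P) ?A \<le> measure (completion P) H"
    using H vimage_image_in_sets_completion by (intro C.finite_measure_mono) auto
  with pos H(1) have "0 < measure P H"
    by simp
  then obtain m where m: "1 / real (Suc m) < measure P H"
    using nat_approx_posE by blast
  then have "ennreal (1 / real (Suc m)) < outer_measure_of P ?A"
    using H by (simp add: emeasure_eq_measure ennreal_less_iff)
  then obtain s where "\<And>k. ennreal (1 / real (Suc m)) < emeasure P (\<phi> -` closed_scheme s k)"
    using outer_approx_by_closed_scheme by blast
  then have "\<And>k. 1 / real (Suc m) \<le> measure P (\<phi> -` closed_scheme s k)"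
    by (simp add: emeasure_eq_measure ennreal_less_iff less_imp_le)
  then show "\<exists>m s. \<forall>k. 1 / real (Suc m) \<le> measure P (\<phi> -` closed_scheme s k)"
    by blast
next
  interpret finite_measure P by (rule finite_P)
  interpret C: finite_measure "completion P" by (rule finite_measure_completion[OF finite_P])
  assume "\<exists>m s. \<forall>k. 1 / real (Suc m) \<le> measure P (\<phi> -` closed_scheme s k)"
  then obtain m s where "\<And>k. ennreal (1 / real (Suc m)) \<le> emeasure P (\<phi> -` closed_scheme s k)"
    by (auto simp: emeasure_eq_measure)
  then obtain B where B: "B \<in> sets P" "B \<subseteq> \<phi> -` g ` M" "ennreal (1 / real (Suc m)) \<le> emeasure P B"
    using inner_approx_by_closed_scheme by blast
  have "0 < 1 / real (Suc m)"
    by simp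
  also have "\<dots> \<le> measure P B"
    using B(3) by (simp add: emeasure_eq_measure)
  also have "measure P B \<le> measure (completion P) (\<phi> -` g ` M)"
    using B vimage_image_in_sets_completion C.finite_measure_mono[of B] by simp
  finally show "0 < measure (completion P) (\<phi> -` g ` M)" .
qed

end

end

lemma analytic_in_imp_souslin_scheme:
  fixes A :: "'e::metric_space set"
  assumes "analytic_in euclidean A" "A \<noteq> {}"
  obtains M d g and x :: "nat \<Rightarrow> nat \<Rightarrow> real" where "souslin_scheme M d g x" "g ` M = A"
proof -
  obtain T :: "(nat \<Rightarrow> real) topology" and g
    where T: "Polish_space T" and g: "continuous_map T euclidean g" and A: "g ` topspace T = A"
    using assms(1) unfolding analytic_in_def by blast
  obtain M d where Md: "Metric_space M d" "Metric_space.mcomplete M d" "T = Metric_space.mtopology M d"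
    using T unfolding Polish_space_def completely_metrizable_space_def by blast
  interpret Metric_space M d
    by (rule Md(1))
  obtain C where C: "countable C" "C \<subseteq> M" "mtopology closure_of C = M"
    using T Md(3) unfolding Polish_space_def separable_space_def by auto
  have "C \<noteq> {}"
    using C(3) A assms(2) Md(3) by auto
  then have "range (from_nat_into C) = C"
    using C(1) by (rule range_from_nat_into)
  then have "souslin_scheme M d g (from_nat_into C)"
    using Md g C by unfold_locales auto
  moreover have "g ` M = A"
    using A Md(3) by simp
  ultimately show thesis
    using that by blast
qed

section \<open>Semicontinuity of the measure of a section\<close>

lemma prob_measuresD:
  assumes "P \<in> prob_measures"
  shows "prob_space P" "finite_measure P" "sets P = sets borel" "space P = UNIV"
    and "prob_space (completion P)"
  using assms sets_eq_imp_space_eq[of P borel] prob_space.prob_space_completion[of P]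
  by (auto simp: prob_measures_def prob_space_def)

definition cutoff :: "'x::metric_space set \<Rightarrow> nat \<Rightarrow> 'x \<Rightarrow> real" where
  "cutoff K n z = max 0 (1 - real (Suc n) * infdist z K)"

lemma cutoff_nonneg: "0 \<le> cutoff K n z"
  and cutoff_le_1: "cutoff K n z \<le> 1"
  unfolding cutoff_def using infdist_nonneg[of z K] by auto

lemma abs_cutoff_le_1: "\<bar>cutoff K n z\<bar> \<le> 1"
  using cutoff_nonneg[of K n z] cutoff_le_1[of K n z] by (simp add: abs_le_iff)

lemma continuous_on_cutoff: "continuous_on UNIV (\<lambda>y. cutoff K n (w, y))"
  unfolding cutoff_def by (intro continuous_intros)

lemma indicator_le_cutoff: "indicator K z \<le> cutoff K n z"
  using cutoff_nonneg[of K n z] unfolding cutoff_def by (auto simp: indicator_def)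

lemma cutoff_Lipschitz: "cutoff K n z \<le> cutoff K n z' + real (Suc n) * dist z z'"
proof -
  have "infdist z' K \<le> infdist z K + dist z z'"
    using infdist_triangle[of z' K z] by (simp add: dist_commute)
  then have "real (Suc n) * infdist z' K \<le> real (Suc n) * infdist z K + real (Suc n) * dist z z'"
    by (metis distrib_left mult_left_mono of_nat_0_le_iff)
  then show ?thesis
    unfolding cutoff_def by auto
qed

lemma indicator_section: "(\<lambda>y. indicator K (w, y) :: real) = indicator (Pair w -` K)"
  by (auto simp: indicator_def)

lemma cutoff_tendsto_indicator:
  assumes "closed K" "K \<noteq> {}"
  shows "(\<lambda>n. cutoff K n z) \<longlonglongrightarrow> indicator K z"
proof (cases "z \<in> K")
  case True
  then show ?thesis
    by (simp add: cutoff_def)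
next
  case False
  then have pos: "infdist z K > 0"
    using infdist_pos_not_in_closed[OF assms] by blast
  then obtain N where N: "1 / real (Suc N) < infdist z K"
    using nat_approx_posE by blast
  have "cutoff K n z = 0" if "N \<le> n" for n
  proof -
    have "1 < real (Suc N) * infdist z K"
      using N by (simp add: field_simps)
    also have "\<dots> \<le> real (Suc n) * infdist z K"
      using that pos by (intro mult_right_mono) auto
    finally show ?thesis
      unfolding cutoff_def by simp
  qed
  then have "(\<lambda>n. cutoff K n z) \<longlonglongrightarrow> 0"
    by (intro tendsto_eventually eventually_sequentiallyI)
  then show ?thesis
    using False by simp
qed

context
  fixes P :: "'b::metric_space measure"
  assumes P: "P \<in> prob_measures"
begin

interpretation prob_space P
  by (rule prob_measuresD(1)[OF P])

lemma integrable_cutoff: "integrable P (\<lambda>y. cutoff K n (w, y))"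
proof (rule integrable_const_bound[of _ 1])
  show "(\<lambda>y. cutoff K n (w, y)) \<in> borel_measurable P"
    using borel_measurable_continuous_onI[OF continuous_on_cutoff] measurable_cong_sets[OF prob_measuresD(3)[OF P] refl]
    by blast
qed (simp add: abs_cutoff_le_1)

lemma section_closed_in_sets: "closed K \<Longrightarrow> Pair w -` K \<in> sets P"
  unfolding prob_measuresD(3)[OF P] by (intro borel_closed continuous_closed_vimage continuous_intros)

lemma integrable_indicator_section: "closed K \<Longrightarrow> integrable P (\<lambda>y. indicator K (w, y) :: real)"
  unfolding indicator_section using section_closed_in_sets
  by (intro integrable_real_indicator) (auto simp: less_top[symmetric])

lemma integral_indicator_section:
  "closed K \<Longrightarrow> (\<integral>y. indicator K (w, y) \<partial>P) = measure P (Pair w -` K)"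
  unfolding indicator_section using section_closed_in_sets by (simp add: prob_measuresD(4)[OF P])

lemma measure_section_le_integral_cutoff:
  assumes "closed K"
  shows "measure P (Pair w -` K) \<le> (\<integral>y. cutoff K n (w, y) \<partial>P)"
  unfolding integral_indicator_section[OF assms, symmetric]
  using assms by (intro integral_mono integrable_cutoff integrable_indicator_section indicator_le_cutoff)

lemma integral_cutoff_tendsto:
  assumes "closed K" "K \<noteq> {}"
  shows "(\<lambda>n. \<integral>y. cutoff K n (w, y) \<partial>P) \<longlonglongrightarrow> measure P (Pair w -` K)"
proof -
  have "(\<lambda>n. \<integral>y. cutoff K n (w, y) \<partial>P) \<longlonglongrightarrow> (\<integral>y. indicator K (w, y) \<partial>P)"
  proof (rule integral_dominated_convergence[where w = "\<lambda>_. 1"])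
    show "(\<lambda>y. indicator K (w, y) :: real) \<in> borel_measurable P"
      by (rule borel_measurable_integrable[OF integrable_indicator_section[OF assms(1)]])
    show "(\<lambda>y. cutoff K n (w, y)) \<in> borel_measurable P" for n
      by (rule borel_measurable_integrable[OF integrable_cutoff])
    show "AE y in P. (\<lambda>n. cutoff K n (w, y)) \<longlonglongrightarrow> indicator K (w, y)"
      using cutoff_tendsto_indicator[OF assms] by simp
    show "AE y in P. norm (cutoff K n (w, y)) \<le> 1" for n
      by (simp add: abs_cutoff_le_1)
  qed simp
  then show ?thesis
    using integral_indicator_section[OF assms(1)] by simp
qed

lemma integral_cutoff_Lipschitz:
  "(\<integral>y. cutoff K n (w, y) \<partial>P) \<le> (\<integral>y. cutoff K n (w0, y) \<partial>P) + real (Suc n) * dist w w0"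
proof -
  have "cutoff K n (w, y) \<le> cutoff K n (w0, y) + real (Suc n) * dist w w0" for y
    using cutoff_Lipschitz[of K n "(w, y)" "(w0, y)"] by (simp add: dist_Pair_Pair)
  then have "(\<integral>y. cutoff K n (w, y) \<partial>P) \<le> (\<integral>y. cutoff K n (w0, y) + real (Suc n) * dist w w0 \<partial>P)"
    by (intro integral_mono integrable_cutoff Bochner_Integration.integrable_add[OF integrable_cutoff])
      simp_all
  also have "\<dots> = (\<integral>y. cutoff K n (w0, y) \<partial>P) + real (Suc n) * dist w w0"
    by (subst Bochner_Integration.integral_add) (auto intro: integrable_cutoff simp: prob_space)
  finally show ?thesis .
qed

end

lemma openin_weak_topology_integral:
  fixes f :: "'b::topological_space \<Rightarrow> real"
  assumes "continuous_on UNIV f" "bounded (range f)" "open U"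
  shows "openin weak_topology {P \<in> prob_measures. integral\<^sup>L P f \<in> U}"
  unfolding weak_topology_def by (rule topology_generated_by_Basis) (use assms in blast)

lemma topspace_weak_topology: "topspace weak_topology = prob_measures"
  unfolding weak_topology_def by auto

lemma bounded_range_cutoff: "bounded (range (\<lambda>y. cutoff K n (w, y)))"
  by (rule boundedI[of _ 1]) (auto simp: abs_cutoff_le_1)

lemma openin_integral_cutoff_less:
  fixes K :: "('a::metric_space \<times> 'b::metric_space) set"
  shows "openin (prod_topology euclidean weak_topology)
           {(w, P). P \<in> prob_measures \<and> (\<integral>y. cutoff K n (w, y) \<partial>P) < c}"
    (is "openin _ ?S")
  unfolding openin_prod_topology_alt
proof (intro allI impI)
  fix w0 P0 assume "(w0, P0) \<in> ?S"
  then have P0: "P0 \<in> prob_measures" and less: "(\<integral>y. cutoff K n (w0, y) \<partial>P0) < c"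
    by auto
  define e where "e = (c - (\<integral>y. cutoff K n (w0, y) \<partial>P0)) / 2"
  have "e > 0"
    using less by (simp add: e_def)
  define U where "U = ball w0 (e / real (Suc n))"
  define V where "V = {P \<in> prob_measures. (\<integral>y. cutoff K n (w0, y) \<partial>P) \<in> {..< (\<integral>y. cutoff K n (w0, y) \<partial>P0) + e}}"
  have "U \<times> V \<subseteq> ?S"
  proof clarify
    fix w P assume "w \<in> U" "P \<in> V"
    then have P: "P \<in> prob_measures" and "(\<integral>y. cutoff K n (w0, y) \<partial>P) < (\<integral>y. cutoff K n (w0, y) \<partial>P0) + e"
      unfolding V_def by auto
    moreover have "real (Suc n) * dist w w0 < e"
      using \<open>w \<in> U\<close> by (simp add: U_def dist_commute pos_less_divide_eq mult.commute)
    moreover have "c = (\<integral>y. cutoff K n (w0, y) \<partial>P0) + 2 * e"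
      unfolding e_def by (simp add: field_simps)
    ultimately show "P \<in> prob_measures \<and> (\<integral>y. cutoff K n (w, y) \<partial>P) < c"
      using integral_cutoff_Lipschitz[OF P, of K n w w0] by linarith
  qed
  moreover have "openin weak_topology V"
    unfolding V_def using continuous_on_cutoff bounded_range_cutoff
    by (rule openin_weak_topology_integral) simp
  ultimately show "\<exists>U V. openin euclidean U \<and> openin weak_topology V \<and> w0 \<in> U \<and> P0 \<in> V \<and> U \<times> V \<subseteq> ?S"
    using \<open>e > 0\<close> P0 by (intro exI[of _ U] exI[of _ V]) (auto simp: U_def V_def)
qed

text \<open>The measure of a section of K is the infimum of the cutoff integrals, each of which
  is upper semicontinuous in (w, P).\<close>
lemma closedin_measure_section_ge:
  fixes K :: "('a::metric_space \<times> 'b::metric_space) set"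
  assumes K: "closed K"
  shows "closedin (prod_topology euclidean weak_topology)
           {(w, P). P \<in> prob_measures \<and> c \<le> measure P (Pair w -` K)}"
proof (cases "K = {}")
  case True
  then have "{(w, P). P \<in> prob_measures \<and> c \<le> measure P (Pair w -` K)} =
      (if c \<le> 0 then topspace (prod_topology euclidean weak_topology) else {})"
    by (auto simp: topspace_weak_topology)
  then show ?thesis
    by (simp del: topspace_prod_topology)
next
  case False
  define S where "S = (\<Union>n. {(w, P). P \<in> prob_measures \<and> (\<integral>y. cutoff K n (w, y) \<partial>P) < c})"
  have "openin (prod_topology euclidean weak_topology) S"
    unfolding S_def by (intro openin_Union) (auto intro: openin_integral_cutoff_less)
  moreover have "{(w, P). P \<in> prob_measures \<and> c \<le> measure P (Pair w -` K)} =
      topspace (prod_topology euclidean weak_topology) - S"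
  proof (intro set_eqI iffI; clarsimp simp: S_def topspace_weak_topology not_less)
    fix w P n assume "P \<in> prob_measures" "c \<le> measure P (Pair w -` K)"
    then show "c \<le> (\<integral>y. cutoff K n (w, y) \<partial>P)"
      using measure_section_le_integral_cutoff[of P K w n] K by linarith
  next
    fix w P assume "P \<in> prob_measures" "\<forall>n. c \<le> (\<integral>y. cutoff K n (w, y) \<partial>P)"
    then show "c \<le> measure P (Pair w -` K)"
      using integral_cutoff_tendsto[of P K w] K False by (intro LIMSEQ_le_const) auto
  qed
  ultimately show ?thesis
    by (metis closedin_diff closedin_topspace)
qed

lemma analytic_in_section_measure_bounded_below:
  fixes K :: "(nat \<Rightarrow> nat) \<Rightarrow> nat \<Rightarrow> ('a::metric_space \<times> 'b::metric_space) set"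
  assumes G: "analytic_in (prod_topology euclidean weak_topology) G"
    and closed: "\<And>s k. closed (K s k)"
    and prefix: "\<And>s s' k. (\<And>j. j < k \<Longrightarrow> s j = s' j) \<Longrightarrow> K s k = K s' k"
  shows "analytic_in euclidean {\<omega>. \<exists>P. (\<omega>, P) \<in> G \<and> P \<in> prob_measures \<and>
    (\<exists>m s. \<forall>k. 1 / real (Suc m) \<le> measure P (Pair \<omega> -` K s k))}"
proof -
  \<comment> \<open>s 0 codes the bound 1/(m+1), the shifted sequence indexes K\<close>
  define \<Phi> where "\<Phi> k s p \<longleftrightarrow> snd p \<in> prob_measures \<and>
      1 / real (Suc (s 0)) \<le> measure (snd p) (Pair (fst p) -` K (\<lambda>j. s (Suc j)) k)"
    for k and s :: "nat \<Rightarrow> nat" and p :: "'a \<times> 'b measure"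
  have \<Phi>_iff: "(\<exists>s. \<forall>k. \<Phi> k s (\<omega>, P)) \<longleftrightarrow> P \<in> prob_measures \<and>
      (\<exists>m s. \<forall>k. 1 / real (Suc m) \<le> measure P (Pair \<omega> -` K s k))" for \<omega> P
  proof
    assume "\<exists>s. \<forall>k. \<Phi> k s (\<omega>, P)"
    then obtain s where "\<forall>k. \<Phi> k s (\<omega>, P)"
      by blast
    then show "P \<in> prob_measures \<and> (\<exists>m s. \<forall>k. 1 / real (Suc m) \<le> measure P (Pair \<omega> -` K s k))"
      unfolding \<Phi>_def by (intro conjI exI[of _ "s 0"] exI[of _ "\<lambda>j. s (Suc j)"]) auto
  next
    assume "P \<in> prob_measures \<and> (\<exists>m s. \<forall>k. 1 / real (Suc m) \<le> measure P (Pair \<omega> -` K s k))"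
    then obtain m s where "P \<in> prob_measures" "\<forall>k. 1 / real (Suc m) \<le> measure P (Pair \<omega> -` K s k)"
      by blast
    then show "\<exists>s. \<forall>k. \<Phi> k s (\<omega>, P)"
      unfolding \<Phi>_def by (intro exI[of _ "case_nat m s"]) simp
  qed
  have "analytic_in euclidean (fst ` {p \<in> G. \<exists>s. \<forall>k. \<Phi> k s p})"
  proof (rule analytic_in_image_Souslin[OF G continuous_map_fst])
    fix k and s s' :: "nat \<Rightarrow> nat" and p
    assume "\<forall>i\<le>k. s i = s' i"
    then have "s 0 = s' 0" "K (\<lambda>j. s (Suc j)) k = K (\<lambda>j. s' (Suc j)) k"
      by (auto intro!: prefix)
    then show "\<Phi> k s p = \<Phi> k s' p"
      by (simp add: \<Phi>_def)
  next
    fix k and s :: "nat \<Rightarrow> nat"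
    have "{p \<in> topspace (prod_topology euclidean weak_topology). \<Phi> k s p} =
        {(w, P). P \<in> prob_measures \<and> 1 / real (Suc (s 0)) \<le> measure P (Pair w -` K (\<lambda>j. s (Suc j)) k)}"
      by (auto simp: \<Phi>_def topspace_weak_topology)
    then show "closedin (prod_topology euclidean weak_topology)
        {p \<in> topspace (prod_topology euclidean weak_topology). \<Phi> k s p}"
      by (simp add: closedin_measure_section_ge closed)
  qed
  moreover have "fst ` {p \<in> G. \<exists>s. \<forall>k. \<Phi> k s p} = {\<omega>. \<exists>P. (\<omega>, P) \<in> G \<and> P \<in> prob_measures \<and>
      (\<exists>m s. \<forall>k. 1 / real (Suc m) \<le> measure P (Pair \<omega> -` K s k))}"
    unfolding \<Phi>_iff[symmetric] by force
  ultimately show ?thesis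
    by simp
qed

section \<open>The quasi-sure support\<close>

lemma closed_qs_supp: "closed (qs_supp \<P> X \<omega>)"
  unfolding qs_supp_def by (rule closed_Inter) auto

text \<open>By Lindelof's theorem, an open set missing the support is covered by countably many
  complements of closed sets of full measure.\<close>
lemma null_sets_outside_qs_supp:
  fixes X :: "'a \<times> 'b::topological_space \<Rightarrow> 'c::second_countable_topology"
  assumes \<P>: "\<P> \<omega> \<subseteq> prob_measures" and U: "open U" "qs_supp \<P> X \<omega> \<inter> U = {}"
    and P: "P \<in> \<P> \<omega>"
  shows "{y. X (\<omega>, y) \<in> U} \<in> null_sets (completion P)"
proof -
  have "P \<in> prob_measures"
    using \<P> P by blast
  interpret prob_space "completion P"
    by (rule prob_measuresD(5)[OF \<open>P \<in> prob_measures\<close>])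
  define \<F> where "\<F> = {F. closed F \<and> (\<forall>P\<in>\<P> \<omega>. measure (completion P) {y. X (\<omega>, y) \<in> F} = 1)}"
  obtain \<G> where \<G>: "\<G> \<subseteq> uminus ` \<F>" "countable \<G>" "\<Union>\<G> = \<Union>(uminus ` \<F>)"
    using Lindelof[of "uminus ` \<F>"] by (auto simp: \<F>_def)
  have "U \<subseteq> \<Union>\<G>"
    using U(2) \<G>(3) unfolding qs_supp_def \<F>_def by auto
  have "{y. X (\<omega>, y) \<in> - F} \<in> null_sets (completion P)" if "F \<in> \<F>" for F
  proof -
    have "measure (completion P) {y. X (\<omega>, y) \<in> F} = 1"
      using that P by (auto simp: \<F>_def)
    then have "{y. X (\<omega>, y) \<in> F} \<in> events"
      using measure_notin_sets by fastforce
    moreover have "{y. X (\<omega>, y) \<in> - F} = space (completion P) - {y. X (\<omega>, y) \<in> F}"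
      using prob_measuresD(4)[OF \<open>P \<in> prob_measures\<close>] by auto
    ultimately show ?thesis
      using prob_compl \<open>measure (completion P) _ = 1\<close> by (auto simp: null_sets_def emeasure_eq_measure)
  qed
  then have "(\<Union>S\<in>\<G>. {y. X (\<omega>, y) \<in> S}) \<in> null_sets (completion P)"
    using \<G>(1,2) by (intro null_sets_UN') auto
  moreover have "{y. X (\<omega>, y) \<in> U} \<subseteq> (\<Union>S\<in>\<G>. {y. X (\<omega>, y) \<in> S})"
    using \<open>U \<subseteq> \<Union>\<G>\<close> by blast
  ultimately show ?thesis
    by (rule complete_measure.complete2[OF completion.complete_measure_axioms, rotated])
qed

lemma qs_supp_nonempty:
  fixes X :: "'a \<times> 'b::topological_space \<Rightarrow> 'c::second_countable_topology"
  assumes "\<P> \<omega> \<noteq> {}" "\<P> \<omega> \<subseteq> prob_measures"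
  shows "qs_supp \<P> X \<omega> \<noteq> {}"
proof
  assume empty: "qs_supp \<P> X \<omega> = {}"
  obtain P where P: "P \<in> \<P> \<omega>"
    using assms(1) by blast
  then have "P \<in> prob_measures"
    using assms(2) by blast
  then interpret prob_space "completion P"
    by (rule prob_measuresD(5))
  have "space P = UNIV"
    by (rule prob_measuresD(4)) fact
  moreover have "{y. X (\<omega>, y) \<in> UNIV} \<in> null_sets (completion P)"
    using null_sets_outside_qs_supp[where \<P>=\<P> and \<omega>=\<omega> and X=X, OF assms(2) open_UNIV _ P] empty
    by simp
  ultimately show False
    using emeasure_space_1 by (simp add: null_sets_def)
qed

lemma qs_supp_meets_open_iff:
  fixes X :: "'a \<times> 'b::topological_space \<Rightarrow> 'c::second_countable_topology"
  assumes \<P>: "\<P> \<omega> \<subseteq> prob_measures" and U: "open U"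
    and sets: "\<And>P. P \<in> \<P> \<omega> \<Longrightarrow> {y. X (\<omega>, y) \<in> U} \<in> sets (completion P)"
  shows "qs_supp \<P> X \<omega> \<inter> U \<noteq> {} \<longleftrightarrow> (\<exists>P\<in>\<P> \<omega>. 0 < measure (completion P) {y. X (\<omega>, y) \<in> U})"
proof
  assume "\<exists>P\<in>\<P> \<omega>. 0 < measure (completion P) {y. X (\<omega>, y) \<in> U}"
  then obtain P where P: "P \<in> \<P> \<omega>" and pos: "0 < measure (completion P) {y. X (\<omega>, y) \<in> U}"
    by blast
  show "qs_supp \<P> X \<omega> \<inter> U \<noteq> {}"
  proof
    assume "qs_supp \<P> X \<omega> \<inter> U = {}"
    then have "{y. X (\<omega>, y) \<in> U} \<in> null_sets (completion P)"
      using null_sets_outside_qs_supp[where \<P>=\<P> and \<omega>=\<omega> and X=X, OF \<P> U _ P] by blast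
    with pos show False
      by (simp add: measure_def null_sets_def)
  qed
next
  assume meets: "qs_supp \<P> X \<omega> \<inter> U \<noteq> {}"
  show "\<exists>P\<in>\<P> \<omega>. 0 < measure (completion P) {y. X (\<omega>, y) \<in> U}"
  proof (rule ccontr)
    assume "\<not> (\<exists>P\<in>\<P> \<omega>. 0 < measure (completion P) {y. X (\<omega>, y) \<in> U})"
    then have null: "measure (completion P) {y. X (\<omega>, y) \<in> U} = 0" if "P \<in> \<P> \<omega>" for P
      using that measure_nonneg[of "completion P"] by (meson linorder_not_le order_antisym)
    have "measure (completion P) {y. X (\<omega>, y) \<in> - U} = 1" if P: "P \<in> \<P> \<omega>" for P
    proof -
      have "P \<in> prob_measures"
        using \<P> P by blast
      then interpret prob_space "completion P"
        by (rule prob_measuresD(5))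
      have "space P = UNIV"
        by (rule prob_measuresD(4)) fact
      then have "{y. X (\<omega>, y) \<in> - U} = space (completion P) - {y. X (\<omega>, y) \<in> U}"
        by auto
      then show ?thesis
        using prob_compl[OF sets[OF P]] null[OF P] by simp
    qed
    then have "qs_supp \<P> X \<omega> \<subseteq> - U"
      using U unfolding qs_supp_def by blast
    with meets show False
      by blast
  qed
qed

lemma qs_supp_meets_iff_closed_scheme:
  fixes \<P> :: "'a::metric_space \<Rightarrow> 'b::metric_space measure set"
    and X :: "'a \<times> 'b \<Rightarrow> 'c::second_countable_topology"
  assumes "souslin_scheme M d g x" and gM: "g ` M = X -` C"
    and \<P>: "\<P> \<omega> \<subseteq> prob_measures" and C: "open C"
  shows "qs_supp \<P> X \<omega> \<inter> C \<noteq> {} \<longleftrightarrow> (\<exists>P\<in>\<P> \<omega>. \<exists>m s. \<forall>k.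
    1 / real (Suc m) \<le> measure P (Pair \<omega> -` souslin_scheme.closed_scheme M d g x s k))"
proof -
  interpret souslin_scheme M d g x
    by fact
  have section_eq: "Pair \<omega> -` g ` M = {y. X (\<omega>, y) \<in> C}"
    using gM by auto
  have P: "finite_measure P" "sets P = sets borel" "continuous_on UNIV (Pair \<omega>)" if "P \<in> \<P> \<omega>" for P
    using \<P> that prob_measuresD[of P] by (auto intro: continuous_on_Pair continuous_on_const continuous_on_id)
  have "qs_supp \<P> X \<omega> \<inter> C \<noteq> {} \<longleftrightarrow> (\<exists>P\<in>\<P> \<omega>. 0 < measure (completion P) {y. X (\<omega>, y) \<in> C})"
    using vimage_image_in_sets_completion[OF P] section_eq
    by (intro qs_supp_meets_open_iff[where \<P>=\<P>, OF \<P> C]) auto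
  also have "\<dots> \<longleftrightarrow> (\<exists>P\<in>\<P> \<omega>. \<exists>m s. \<forall>k. 1 / real (Suc m) \<le> measure P (Pair \<omega> -` closed_scheme s k))"
    using measure_completion_vimage_image_pos_iff[OF P] section_eq by auto
  finally show ?thesis .
qed

lemma analytic_in_qs_supp_meets:
  fixes \<P> :: "'a::metric_space \<Rightarrow> 'b::metric_space measure set"
    and X :: "'a \<times> 'b \<Rightarrow> 'c::second_countable_topology"
  assumes \<P>: "\<And>\<omega>. \<P> \<omega> \<subseteq> prob_measures"
    and graph: "analytic_in (prod_topology euclidean weak_topology) {(\<omega>, P). P \<in> \<P> \<omega>}"
    and C: "open C" and XC: "analytic_in euclidean (X -` C)"
  shows "analytic_in euclidean {\<omega>. qs_supp \<P> X \<omega> \<inter> C \<noteq> {}}"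
proof (cases "X -` C = {}")
  case True
  then have "{y. X (\<omega>, y) \<in> C} = {}" for \<omega>
    by auto
  then have "qs_supp \<P> X \<omega> \<inter> C = {}" for \<omega>
    using qs_supp_meets_open_iff[where \<P>=\<P> and X=X and \<omega>=\<omega>, OF \<P> C] by simp
  then show ?thesis
    using analytic_in_empty by simp
next
  case False
  then obtain M d g and x :: "nat \<Rightarrow> nat \<Rightarrow> real"
    where scheme: "souslin_scheme M d g x" and gM: "g ` M = X -` C"
    using analytic_in_imp_souslin_scheme[OF XC] by blast
  interpret souslin_scheme M d g x
    by (fact scheme)
  have "qs_supp \<P> X \<omega> \<inter> C \<noteq> {} \<longleftrightarrow> (\<exists>P. (\<omega>, P) \<in> {(\<omega>, P). P \<in> \<P> \<omega>} \<and> P \<in> prob_measures \<and>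
      (\<exists>m s. \<forall>k. 1 / real (Suc m) \<le> measure P (Pair \<omega> -` closed_scheme s k)))" for \<omega>
    using qs_supp_meets_iff_closed_scheme[where \<P>=\<P> and \<omega>=\<omega>, OF scheme gM \<P> C] \<P> by blast
  moreover have "analytic_in euclidean {\<omega>. \<exists>P. (\<omega>, P) \<in> {(\<omega>, P). P \<in> \<P> \<omega>} \<and> P \<in> prob_measures \<and>
      (\<exists>m s. \<forall>k. 1 / real (Suc m) \<le> measure P (Pair \<omega> -` closed_scheme s k))}"
    by (rule analytic_in_section_measure_bounded_below[OF graph closed_closed_scheme closed_scheme_cong])
  ultimately show ?thesis
    by simp
qed

theorem lemma1:
  fixes \<P> :: "'a::polish_space \<Rightarrow> 'b::polish_space measure set"
    and \<C> :: "'c::euclidean_space set set"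
    and X :: "'a \<times> 'b \<Rightarrow> 'c"
  assumes P_ne: "\<And>\<omega>. \<P> \<omega> \<noteq> {}"
    and P_pm: "\<And>\<omega>. \<P> \<omega> \<subseteq> prob_measures"
    and graph_analytic:
      "analytic_in (prod_topology euclidean weak_topology) {(\<omega>, P). P \<in> \<P> \<omega>}"
    and C_open: "\<And>C. C \<in> \<C> \<Longrightarrow> open C"
    and X_meas: "\<And>C. C \<in> \<C> \<Longrightarrow> analytic_in euclidean (X -` C)"
  shows "(\<forall>\<omega>. qs_supp \<P> X \<omega> \<noteq> {} \<and> closed (qs_supp \<P> X \<omega>)) \<and>
         (\<forall>C\<in>\<C>. analytic_in euclidean {\<omega>. qs_supp \<P> X \<omega> \<inter> C \<noteq> {}})"
proof (intro conjI allI ballI)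
  fix \<omega>
  show "qs_supp \<P> X \<omega> \<noteq> {}"
    using qs_supp_nonempty[where \<P>=\<P> and X=X, OF P_ne P_pm] .
  show "closed (qs_supp \<P> X \<omega>)"
    by (rule closed_qs_supp)
next
  fix C assume "C \<in> \<C>"
  then show "analytic_in euclidean {\<omega>. qs_supp \<P> X \<omega> \<inter> C \<noteq> {}}"
    by (intro analytic_in_qs_supp_meets[OF P_pm graph_analytic C_open X_meas])
qed

end
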